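(* Let $n\geq 1$. Suppose $\mathbf A\subseteq\mathbf B$ are finite equidistributed measured boolean algebras ($\mathbf A$ a subalgebra of $\mathbf B$ with the restricted measure), $g$ is an automorphism of $\mathbf A$ and $f$ is an automorphism of $\mathbf B$ such that $f|_{\mathbf A}=g^n$. Then there is a finite equidistributed measured boolean algebra $\mathbf C$ containing $\mathbf B$ as a measured subalgebra and an automorphism $h$ of $\mathbf C$ extending $g$ such that $h^n|_{\mathbf B}=f$. The same holds with "equidistributed" replaced throughout by "equidistributed dyadic".
   Context: A finite boolean algebra equipped with a finitely additive probability measure is equidistributed if all its atoms have the same positive measure, and equidistributed dyadic if it has $2^k$ atoms each of measure $2^{-k}$ for some $k\ge 0$. For equidistributed algebras every automorphism (permutation of atoms) is measure preserving. *)

theory Defs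
  imports "HOL-Probability.Probability"
begin

text \<open>A finite measured boolean algebra is represented concretely as a finite algebra of
  sets (the measurable sets of a measure) carrying a probability measure.  Every finite
  boolean algebra is isomorphic to such a set algebra, and on a finite algebra finite
  additivity coincides with countable additivity.\<close>

definition finite_mba :: "'a measure \<Rightarrow> bool" where
  "finite_mba M \<longleftrightarrow> prob_space M \<and> finite (sets M)"

definition mba_atom :: "'a measure \<Rightarrow> 'a set \<Rightarrow> bool" where
  "mba_atom M a \<longleftrightarrow> a \<in> sets M \<and> a \<noteq> {} \<and> (\<forall>b\<in>sets M. b \<subseteq> a \<longrightarrow> b = {} \<or> b = a)"

definition equidistributed :: "'a measure \<Rightarrow> bool" where
  "equidistributed M \<longleftrightarrow> finite_mba M \<and>
     (\<exists>c::real. c > 0 \<and> (\<forall>a. mba_atom M a \<longrightarrow> measure M a = c))"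

definition equidistributed_dyadic :: "'a measure \<Rightarrow> bool" where
  "equidistributed_dyadic M \<longleftrightarrow> finite_mba M \<and>
     (\<exists>k::nat. card {a. mba_atom M a} = 2 ^ k \<and>
        (\<forall>a. mba_atom M a \<longrightarrow> measure M a = 1 / 2 ^ k))"

definition measured_subalgebra :: "'a measure \<Rightarrow> 'a measure \<Rightarrow> bool" where
  "measured_subalgebra A B \<longleftrightarrow> space A = space B \<and> sets A \<subseteq> sets B \<and>
     (\<forall>X\<in>sets A. measure A X = measure B X)"

definition ba_automorphism :: "'a measure \<Rightarrow> ('a set \<Rightarrow> 'a set) \<Rightarrow> bool" where
  "ba_automorphism M f \<longleftrightarrow> bij_betw f (sets M) (sets M) \<and>
     (\<forall>X\<in>sets M. \<forall>Y\<in>sets M. f (X \<union> Y) = f X \<union> f Y) \<and>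
     (\<forall>X\<in>sets M. f (space M - X) = space M - f X)"

text \<open>Embedding of measured boolean algebras: injective boolean homomorphism preserving
  the measure.  "C contains B as a measured subalgebra" is read up to isomorphism via
  such an embedding.\<close>
definition mba_embedding :: "'a measure \<Rightarrow> 'b measure \<Rightarrow> ('a set \<Rightarrow> 'b set) \<Rightarrow> bool" where
  "mba_embedding B C e \<longleftrightarrow> inj_on e (sets B) \<and> e ` sets B \<subseteq> sets C \<and>
     (\<forall>X\<in>sets B. \<forall>Y\<in>sets B. e (X \<union> Y) = e X \<union> e Y) \<and>
     (\<forall>X\<in>sets B. e (space B - X) = space C - e X) \<and>
     (\<forall>X\<in>sets B. measure C (e X) = measure B X)"

end

theory Submission
  imports Defs
begin

text \<open>Since A and B are equidistributed, every atom q of A contains the same number m of atoms of B.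
  The atoms of C are the threads (b_0, ..., b_{n-1}) of atoms of B with b_i below g^i q for some
  atom q of A; there are |atoms B| * m^(n-1) of them, a power of two if A and B are dyadic.
  A set X of B is sent to the set of threads with b_0 \<subseteq> X, and h shifts threads,
  (b_0, ..., b_{n-1}) \<mapsto> (b_1, ..., b_{n-1}, f b_0). As f q = g^n q, the shift maps threads over q
  to threads over g q, so h extends g; and h^n acts on the first entry as f, so h^n extends f.\<close>

section \<open>Atoms of finite measured boolean algebras\<close>

definition atoms :: "'a measure \<Rightarrow> 'a set set" where
  "atoms M = {a. mba_atom M a}"

lemma mba_atom_sets: "mba_atom M a \<Longrightarrow> a \<in> sets M"
  and mba_atom_nonempty: "mba_atom M a \<Longrightarrow> a \<noteq> {}"
  and mba_atom_subset_cases: "mba_atom M a \<Longrightarrow> b \<in> sets M \<Longrightarrow> b \<subseteq> a \<Longrightarrow> b = {} \<or> b = a"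
  unfolding mba_atom_def by blast+

lemma finite_atoms: "finite_mba M \<Longrightarrow> finite (atoms M)"
  unfolding finite_mba_def atoms_def
  by (rule finite_subset[of _ "sets M"]) (auto dest: mba_atom_sets)

lemma mba_atom_subset_or_disjoint:
  assumes "mba_atom M a" "X \<in> sets M"
  shows "a \<subseteq> X \<or> a \<inter> X = {}"
  using mba_atom_subset_cases[OF assms(1) sets.Int[OF mba_atom_sets[OF assms(1)] assms(2)]] by blast

lemma mba_atom_eqI:
  assumes "mba_atom M a" "mba_atom M b" "a \<inter> b \<noteq> {}"
  shows "a = b"
  using mba_atom_subset_or_disjoint[OF assms(1) mba_atom_sets[OF assms(2)]]
    mba_atom_subset_or_disjoint[OF assms(2) mba_atom_sets[OF assms(1)]] assms(3) by blast

lemma mba_atom_exists: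
  assumes "finite_mba M" "X \<in> sets M" "x \<in> X"
  obtains a where "mba_atom M a" "x \<in> a" "a \<subseteq> X"
proof -
  define F where "F = {Y\<in>sets M. x \<in> Y \<and> Y \<subseteq> X}"
  define a where "a = (\<Inter>Y\<in>F. Y)"
  have "finite F" "X \<in> F"
    using assms unfolding finite_mba_def F_def by auto
  then have a_sets: "a \<in> sets M"
    unfolding a_def by (intro sets.finite_INT) (auto simp: F_def)
  have "x \<in> a" "a \<subseteq> X"
    using \<open>X \<in> F\<close> unfolding a_def F_def by auto
  moreover have "mba_atom M a"
    unfolding mba_atom_def
  proof (intro conjI ballI impI)
    fix b assume b: "b \<in> sets M" "b \<subseteq> a"
    show "b = {} \<or> b = a"
    proof (cases "x \<in> b")
      case True
      then have "b \<in> F" using b \<open>a \<subseteq> X\<close> unfolding F_def by auto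
      then show ?thesis using b unfolding a_def by auto
    next
      case False
      then have "a - b \<in> F" using b a_sets \<open>x \<in> a\<close> \<open>a \<subseteq> X\<close> unfolding F_def by auto
      then show ?thesis using b unfolding a_def by auto
    qed
  qed (use a_sets \<open>x \<in> a\<close> in auto)
  ultimately show ?thesis using that by blast
qed

lemma atoms_nonempty:
  assumes "finite_mba M"
  shows "atoms M \<noteq> {}"
proof -
  interpret prob_space M
    using assms by (simp add: finite_mba_def)
  obtain x where "x \<in> space M"
    using not_empty by blast
  then obtain a where "mba_atom M a"
    using mba_atom_exists[OF assms sets.top] by blast
  then show ?thesis
    by (auto simp: atoms_def)
qed

lemma Union_atoms_below:
  assumes "finite_mba M" "X \<in> sets M"
  shows "\<Union>{a\<in>atoms M. a \<subseteq> X} = X"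
  using mba_atom_exists[OF assms] unfolding atoms_def by blast

lemma measure_eq_sum_atoms:
  assumes "finite_mba M" "X \<in> sets M"
  shows "measure M X = (\<Sum>a\<in>{a\<in>atoms M. a \<subseteq> X}. measure M a)"
proof -
  interpret prob_space M
    using assms(1) by (simp add: finite_mba_def)
  have "measure M X = measure M (\<Union>a\<in>{a\<in>atoms M. a \<subseteq> X}. a)"
    using Union_atoms_below[OF assms] by simp
  also have "\<dots> = (\<Sum>a\<in>{a\<in>atoms M. a \<subseteq> X}. measure M a)"
    using finite_atoms[OF assms(1)] mba_atom_eqI
    by (intro finite_measure_finite_Union) (auto simp: atoms_def disjoint_family_on_def mba_atom_sets)
  finally show ?thesis .
qed

lemma measure_atom_equidistributed:
  assumes "equidistributed M" "mba_atom M a"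
  shows "measure M a = 1 / card (atoms M)"
proof -
  obtain c where c: "\<And>a. mba_atom M a \<Longrightarrow> measure M a = c" and fin: "finite_mba M"
    using assms(1) unfolding equidistributed_def by blast
  interpret prob_space M
    using fin by (simp add: finite_mba_def)
  have "{a\<in>atoms M. a \<subseteq> space M} = atoms M"
    by (auto simp: atoms_def dest: mba_atom_sets sets.sets_into_space)
  then have "1 = c * card (atoms M)"
    using measure_eq_sum_atoms[OF fin sets.top] c prob_space by (simp add: atoms_def mult.commute)
  moreover from this have "card (atoms M) \<noteq> 0" by (metis mult_zero_right of_nat_0 zero_neq_one)
  ultimately show ?thesis
    using c[OF assms(2)] by (simp add: eq_divide_eq)
qed

lemma measure_equidistributed:
  assumes "equidistributed M" "X \<in> sets M"
  shows "measure M X = card {a\<in>atoms M. a \<subseteq> X} / card (atoms M)"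
  using assms measure_eq_sum_atoms[of M X] measure_atom_equidistributed[OF assms(1)]
  by (simp add: equidistributed_def atoms_def)

lemma equidistributed_if_dyadic:
  assumes "equidistributed_dyadic M"
  shows "equidistributed M"
proof -
  obtain k where "finite_mba M" "\<forall>a. mba_atom M a \<longrightarrow> measure M a = 1 / 2 ^ k"
    using assms by (auto simp: equidistributed_dyadic_def)
  then show ?thesis
    unfolding equidistributed_def by (intro conjI exI[of _ "1 / 2 ^ k"]) auto
qed

lemma ba_automorphism_sets: "ba_automorphism M f \<Longrightarrow> X \<in> sets M \<Longrightarrow> f X \<in> sets M"
  unfolding ba_automorphism_def bij_betw_def by auto

lemma ba_automorphism_subset_iff:
  assumes "ba_automorphism M f" "X \<in> sets M" "Y \<in> sets M"
  shows "f X \<subseteq> f Y \<longleftrightarrow> X \<subseteq> Y"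
proof -
  have "f X \<subseteq> f Y \<longleftrightarrow> f (X \<union> Y) = f Y"
    using assms unfolding ba_automorphism_def by auto
  also have "\<dots> \<longleftrightarrow> X \<union> Y = Y"
    using assms sets.Un unfolding ba_automorphism_def bij_betw_def by (metis inj_on_eq_iff)
  finally show ?thesis by auto
qed

lemma ba_automorphism_empty:
  assumes "ba_automorphism M f"
  shows "f {} = {}"
proof -
  have "f {} \<subseteq> f (space M - {})"
    using ba_automorphism_subset_iff[OF assms] by blast
  also have "\<dots> = space M - f {}"
    using assms unfolding ba_automorphism_def by blast
  finally show ?thesis by auto
qed

lemma ba_automorphism_atom:
  assumes "ba_automorphism M f" "mba_atom M a"
  shows "mba_atom M (f a)"
  unfolding mba_atom_def
proof (intro conjI ballI impI)
  have a: "a \<in> sets M" using assms(2) by (rule mba_atom_sets)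
  show "f a \<in> sets M" by (rule ba_automorphism_sets[OF assms(1) a])
  show "f a \<noteq> {}"
    using ba_automorphism_subset_iff[OF assms(1) a sets.empty_sets] ba_automorphism_empty[OF assms(1)]
      mba_atom_nonempty[OF assms(2)] by auto
  fix b assume b: "b \<in> sets M" "b \<subseteq> f a"
  then obtain b' where b': "b' \<in> sets M" "b = f b'"
    using assms(1) unfolding ba_automorphism_def bij_betw_def by blast
  then have "b' = {} \<or> b' = a"
    using b ba_automorphism_subset_iff[OF assms(1) b'(1) a] mba_atom_subset_cases[OF assms(2)] by auto
  then show "b = {} \<or> b = f a"
    using b' ba_automorphism_empty[OF assms(1)] by auto
qed

lemma ba_automorphism_funpow_atom:
  "ba_automorphism M f \<Longrightarrow> mba_atom M a \<Longrightarrow> mba_atom M ((f ^^ k) a)"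
  by (induction k) (auto intro: ba_automorphism_atom)

section \<open>Uniform counting measures\<close>

lemma mba_atom_uniform_count_measure_iff:
  assumes "finite S"
  shows "mba_atom (uniform_count_measure S) a \<longleftrightarrow> (\<exists>x\<in>S. a = {x})"
  unfolding mba_atom_def sets_uniform_count_measure
  by (auto simp: subset_singleton_iff)

lemma atoms_uniform_count_measure:
  "finite S \<Longrightarrow> atoms (uniform_count_measure S) = (\<lambda>x. {x}) ` S"
  by (auto simp: atoms_def mba_atom_uniform_count_measure_iff)

lemma measure_atom_uniform_count_measure:
  assumes "finite S" "mba_atom (uniform_count_measure S) a"
  shows "measure (uniform_count_measure S) a = 1 / card S"
  using assms measure_uniform_count_measure[OF assms(1)]
  by (auto simp: mba_atom_uniform_count_measure_iff)

lemma finite_mba_uniform_count_measure: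
  "finite S \<Longrightarrow> S \<noteq> {} \<Longrightarrow> finite_mba (uniform_count_measure S)"
  using prob_space_uniform_count_measure by (simp add: finite_mba_def sets_uniform_count_measure)

lemma equidistributed_uniform_count_measure:
  assumes "finite S" "S \<noteq> {}"
  shows "equidistributed (uniform_count_measure S)"
proof -
  have "card S > 0"
    using assms by (simp add: card_gt_0_iff)
  then have "1 / real (card S) > 0"
    by simp
  then show ?thesis
    unfolding equidistributed_def
    using finite_mba_uniform_count_measure[OF assms] measure_atom_uniform_count_measure[OF assms(1)]
    by blast
qed

lemma equidistributed_dyadic_uniform_count_measure:
  assumes "finite S" "card S = 2 ^ k"
  shows "equidistributed_dyadic (uniform_count_measure S)"
proof -
  have "S \<noteq> {}" using assms by auto
  then have "finite_mba (uniform_count_measure S)"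
    using assms(1) finite_mba_uniform_count_measure by blast
  moreover have "card {a. mba_atom (uniform_count_measure S) a} = card S"
    using atoms_uniform_count_measure[OF assms(1)] by (simp add: atoms_def card_image)
  ultimately show ?thesis
    unfolding equidistributed_dyadic_def using assms measure_atom_uniform_count_measure[OF assms(1)] by auto
qed

lemma image_funpow:
  fixes f :: "'a \<Rightarrow> 'a"
  shows "((`) f ^^ k) X = (f ^^ k) ` X"
  by (induction k) (simp_all add: image_comp)

lemma funpow_conjugate:
  assumes enc: "bij_betw enc \<Omega> S" and H: "H ` \<Omega> \<subseteq> \<Omega>" and x: "x \<in> \<Omega>"
  shows "((enc \<circ> H \<circ> inv_into \<Omega> enc) ^^ k) (enc x) = enc ((H ^^ k) x)"
proof (induction k)
  case (Suc k)
  have "(H ^^ k) x \<in> \<Omega>"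
    using H x by (induction k) auto
  then show ?case
    using Suc bij_betw_imp_inj_on[OF enc] by simp
qed simp

lemma ba_automorphism_uniform_count_measure_image:
  assumes "bij_betw K S S"
  shows "ba_automorphism (uniform_count_measure S) ((`) K)"
  unfolding ba_automorphism_def sets_uniform_count_measure space_uniform_count_measure
proof (intro conjI ballI)
  show "bij_betw ((`) K) (Pow S) (Pow S)"
    using assms by (rule bij_betw_Pow)
  fix X assume "X \<in> Pow S"
  then show "K ` (S - X) = S - K ` X"
    using inj_on_image_set_diff[OF bij_betw_imp_inj_on[OF assms]] bij_betw_imp_surj_on[OF assms] by auto
qed (rule image_Un)

lemma mba_embedding_uniform_count_measureI:
  assumes "finite S"
    and "\<And>X. X \<in> sets B \<Longrightarrow> e X \<subseteq> S"
    and "inj_on e (sets B)"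
    and "\<And>X Y. X \<in> sets B \<Longrightarrow> Y \<in> sets B \<Longrightarrow> e (X \<union> Y) = e X \<union> e Y"
    and "\<And>X. X \<in> sets B \<Longrightarrow> e (space B - X) = S - e X"
    and "\<And>X. X \<in> sets B \<Longrightarrow> card (e X) / card S = measure B X"
  shows "mba_embedding B (uniform_count_measure S) e"
  unfolding mba_embedding_def sets_uniform_count_measure space_uniform_count_measure
  using assms measure_uniform_count_measure[OF assms(1)] by auto

lemma mba_embedding_uniform_count_measure_relabel:
  assumes "finite \<Omega>" and enc: "bij_betw enc \<Omega> S"
    and e: "mba_embedding B (uniform_count_measure \<Omega>) e"
  shows "mba_embedding B (uniform_count_measure S) (\<lambda>X. enc ` e X)"
proof (rule mba_embedding_uniform_count_measureI)
  have inj: "inj_on enc \<Omega>" and img: "enc ` \<Omega> = S"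
    using enc by (auto simp: bij_betw_def)
  have sub: "X \<in> sets B \<Longrightarrow> e X \<subseteq> \<Omega>" for X
    using e by (auto simp: mba_embedding_def sets_uniform_count_measure)
  show "finite S"
    using assms(1) img by blast
  show "X \<in> sets B \<Longrightarrow> enc ` e X \<subseteq> S" for X
    using sub img by blast
  show "inj_on (\<lambda>X. enc ` e X) (sets B)"
    using e sub inj_on_image_eq_iff[OF inj] by (auto simp: mba_embedding_def inj_on_def)
  show "X \<in> sets B \<Longrightarrow> Y \<in> sets B \<Longrightarrow> enc ` e (X \<union> Y) = enc ` e X \<union> enc ` e Y" for X Y
    using e by (simp add: mba_embedding_def image_Un)
  show "X \<in> sets B \<Longrightarrow> enc ` e (space B - X) = S - enc ` e X" for X
    using e sub inj_on_image_set_diff[OF inj] img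
    by (simp add: mba_embedding_def space_uniform_count_measure)
  show "card (enc ` e X) / card S = measure B X" if "X \<in> sets B" for X
    using e that sub[OF that] measure_uniform_count_measure[OF assms(1) sub[OF that]]
      card_image[OF inj_on_subset[OF inj]] bij_betw_same_card[OF enc]
    by (simp add: mba_embedding_def)
qed

lemma uniform_count_measure_relabel_extension:
  assumes "finite \<Omega>" and enc: "bij_betw enc \<Omega> S" and H: "bij_betw H \<Omega> \<Omega>"
    and e: "mba_embedding B (uniform_count_measure \<Omega>) e" and AB: "sets A \<subseteq> sets B"
    and e_g: "\<forall>X\<in>sets A. H ` e X = e (g X)"
    and e_f: "\<forall>X\<in>sets B. (H ^^ n) ` e X = e (f X)"
  shows "\<exists>e' h'. mba_embedding B (uniform_count_measure S) e' \<and>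
           ba_automorphism (uniform_count_measure S) h' \<and>
           (\<forall>X\<in>sets A. h' (e' X) = e' (g X)) \<and>
           (\<forall>X\<in>sets B. (h' ^^ n) (e' X) = e' (f X))"
proof (intro exI conjI ballI)
  define K where "K = enc \<circ> H \<circ> inv_into \<Omega> enc"
  have relabel: "((`) K ^^ k) (enc ` W) = enc ` (H ^^ k) ` W" if "W \<subseteq> \<Omega>" for W k
  proof -
    have "((`) K ^^ k) (enc ` W) = (\<lambda>x. (K ^^ k) (enc x)) ` W"
      by (simp add: image_funpow image_image)
    also have "\<dots> = (\<lambda>x. enc ((H ^^ k) x)) ` W"
      using funpow_conjugate[OF enc bij_betw_imp_surj_on[OF H, THEN equalityD1]] that
      unfolding K_def by (intro image_cong) auto
    finally show ?thesis
      by (simp add: image_image)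
  qed
  have sub: "X \<in> sets B \<Longrightarrow> e X \<subseteq> \<Omega>" for X
    using e by (auto simp: mba_embedding_def sets_uniform_count_measure)
  show "mba_embedding B (uniform_count_measure S) (\<lambda>X. enc ` e X)"
    by (rule mba_embedding_uniform_count_measure_relabel[OF assms(1) enc e])
  have "bij_betw K S S"
    using bij_betw_trans[OF bij_betw_trans[OF bij_betw_inv_into[OF enc] H] enc]
    by (simp add: K_def o_assoc)
  then show "ba_automorphism (uniform_count_measure S) ((`) K)"
    by (rule ba_automorphism_uniform_count_measure_image)
  show "K ` enc ` e X = enc ` e (g X)" if "X \<in> sets A" for X
    using relabel[OF sub, of X 1] e_g that AB by auto
  show "((`) K ^^ n) (enc ` e X) = enc ` e (f X)" if "X \<in> sets B" for X
    using relabel[OF sub[OF that], of n] e_f that by simp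
qed

lemma bij_betw_image_Collect:
  assumes "bij_betw F S S" "\<And>w. w \<in> S \<Longrightarrow> P w \<longleftrightarrow> Q (F w)"
  shows "F ` {w\<in>S. P w} = {w\<in>S. Q w}"
proof
  show "F ` {w\<in>S. P w} \<subseteq> {w\<in>S. Q w}"
    using assms unfolding bij_betw_def by auto
  show "{w\<in>S. Q w} \<subseteq> F ` {w\<in>S. P w}"
    using assms unfolding bij_betw_def by (auto simp: image_iff) (metis imageE)
qed

lemma mult_pow2_eq_pow2:
  assumes "(m::nat) * 2 ^ a = 2 ^ b"
  shows "m = 2 ^ (b - a)"
proof -
  have "m \<noteq> 0"
    using assms by (metis mult_0 power_not_zero zero_neq_numeral)
  then have "(2::nat) ^ a \<le> 2 ^ b"
    using assms by (metis dvd_imp_le dvd_triv_right zero_less_power zero_less_numeral)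
  then have "(2::nat) ^ b = 2 ^ (b - a) * 2 ^ a"
    by (simp flip: power_add)
  then show ?thesis
    using assms by simp
qed

section \<open>The thread construction\<close>

locale root_extension =
  fixes n :: nat and A B :: "'a measure" and g f :: "'a set \<Rightarrow> 'a set"
  assumes n_pos: "n \<ge> 1"
    and equi_A: "equidistributed A" and equi_B: "equidistributed B"
    and subalgebra: "measured_subalgebra A B"
    and aut_A: "ba_automorphism A g" and aut_B: "ba_automorphism B f"
    and f_restrict: "\<forall>X\<in>sets A. f X = (g ^^ n) X"
begin

lemma finite_A: "finite_mba A" and finite_B: "finite_mba B"
  using equi_A equi_B by (simp_all add: equidistributed_def)

lemma sets_A_subset: "sets A \<subseteq> sets B"
  using subalgebra by (simp add: measured_subalgebra_def)

lemma atoms_A_sets_B: "q \<in> atoms A \<Longrightarrow> q \<in> sets B"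
  using sets_A_subset by (auto simp: atoms_def dest: mba_atom_sets)

definition fiber :: "'a set \<Rightarrow> 'a set set" where
  "fiber q = {b\<in>atoms B. b \<subseteq> q}"

definition fiber_size :: nat where
  "fiber_size = card (atoms B) div card (atoms A)"

lemma atom_B_below_atom_A:
  assumes "b \<in> atoms B"
  obtains q where "q \<in> atoms A" "b \<in> fiber q"
proof -
  obtain x where x: "x \<in> b"
    using assms by (auto simp: atoms_def dest: mba_atom_nonempty)
  moreover have "b \<subseteq> space A"
    using subalgebra assms sets.sets_into_space
    by (auto simp: measured_subalgebra_def atoms_def dest: mba_atom_sets)
  ultimately obtain q where q: "mba_atom A q" "x \<in> q"
    using mba_atom_exists[OF finite_A sets.top] by blast
  then have "b \<subseteq> q"
    using mba_atom_subset_or_disjoint[of B b q] assms x atoms_A_sets_B by (auto simp: atoms_def)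
  then show ?thesis
    using that q assms by (auto simp: atoms_def fiber_def)
qed

lemma fiber_unique:
  assumes "b \<in> fiber q" "b \<in> fiber q'" "q \<in> atoms A" "q' \<in> atoms A"
  shows "q = q'"
proof -
  have "b \<noteq> {}" "b \<subseteq> q \<inter> q'"
    using assms by (auto simp: fiber_def atoms_def dest: mba_atom_nonempty)
  then show ?thesis
    using mba_atom_eqI[of A q q'] assms(3,4) by (auto simp: atoms_def)
qed

lemma fiber_subset_iff:
  assumes "b \<in> fiber q" "q \<in> atoms A" "X \<in> sets A"
  shows "b \<subseteq> X \<longleftrightarrow> q \<subseteq> X"
  using assms mba_atom_subset_or_disjoint[of A q X]
  by (auto simp: fiber_def atoms_def dest: mba_atom_nonempty)

lemma card_fiber_mult:
  assumes q: "q \<in> atoms A"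
  shows "card (fiber q) * card (atoms A) = card (atoms B)"
proof -
  have "1 / card (atoms A) = measure A q"
    using measure_atom_equidistributed[OF equi_A] q by (simp add: atoms_def)
  also have "\<dots> = measure B q"
    using subalgebra q by (auto simp: measured_subalgebra_def atoms_def dest: mba_atom_sets)
  also have "\<dots> = card (fiber q) / card (atoms B)"
    using measure_equidistributed[OF equi_B atoms_A_sets_B[OF q]] by (simp add: fiber_def)
  finally have "1 / card (atoms A) = card (fiber q) / card (atoms B)" .
  moreover have "card (atoms A) \<noteq> 0" "card (atoms B) \<noteq> 0"
    using atoms_nonempty[OF finite_A] finite_atoms[OF finite_A]
      atoms_nonempty[OF finite_B] finite_atoms[OF finite_B] by simp_all
  ultimately have "real (card (fiber q) * card (atoms A)) = card (atoms B)"
    by (simp add: field_simps)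
  then show ?thesis
    by (simp only: of_nat_eq_iff)
qed

lemma card_fiber:
  assumes "q \<in> atoms A"
  shows "card (fiber q) = fiber_size"
proof -
  have "card (atoms A) > 0"
    using assms finite_atoms[OF finite_A] card_gt_0_iff by blast
  then show ?thesis
    by (simp add: fiber_size_def flip: card_fiber_mult[OF assms])
qed

lemma fiber_nonempty: "q \<in> atoms A \<Longrightarrow> fiber q \<noteq> {}"
  using Union_atoms_below[OF finite_B atoms_A_sets_B, of q] mba_atom_nonempty[of A q]
  by (auto simp: fiber_def atoms_def)

lemma fiber_size_pos: "fiber_size > 0"
proof -
  obtain q where q: "q \<in> atoms A"
    using atoms_nonempty[OF finite_A] by blast
  have "finite (fiber q)"
    using finite_atoms[OF finite_B] by (simp add: fiber_def)
  then show ?thesis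
    using card_fiber[OF q] fiber_nonempty[OF q] card_gt_0_iff by metis
qed

lemma funpow_g_atoms: "q \<in> atoms A \<Longrightarrow> (g ^^ i) q \<in> atoms A"
  using ba_automorphism_funpow_atom[OF aut_A] by (simp add: atoms_def)

lemma f_mem_fiber:
  assumes "q \<in> atoms A" "b \<in> fiber q"
  shows "f b \<in> fiber ((g ^^ n) q)"
proof -
  have b: "mba_atom B b" "b \<subseteq> q"
    using assms(2) by (auto simp: fiber_def atoms_def)
  then have "f b \<subseteq> f q"
    using ba_automorphism_subset_iff[OF aut_B mba_atom_sets[OF b(1)] atoms_A_sets_B[OF assms(1)]] by simp
  moreover have "f q = (g ^^ n) q"
    using f_restrict assms(1) by (auto simp: atoms_def dest: mba_atom_sets)
  ultimately show ?thesis
    using ba_automorphism_atom[OF aut_B b(1)] by (simp add: fiber_def atoms_def)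
qed

definition threads :: "(nat \<Rightarrow> 'a set) set" where
  "threads = (\<Union>q\<in>atoms A. \<Pi>\<^sub>E i\<in>{..<n}. fiber ((g ^^ i) q))"

definition shift :: "(nat \<Rightarrow> 'a set) \<Rightarrow> nat \<Rightarrow> 'a set" where
  "shift w = (\<lambda>i. if i < n - 1 then w (Suc i) else if i = n - 1 then f (w 0) else undefined)"

definition lift :: "'a set \<Rightarrow> (nat \<Rightarrow> 'a set) set" where
  "lift X = {w\<in>threads. w 0 \<subseteq> X}"

lemma head_PiE: "w \<in> (\<Pi>\<^sub>E i\<in>{..<n}. T i) \<Longrightarrow> w 0 \<in> T 0"
  using n_pos by (auto simp: PiE_iff)

lemma finite_threads: "finite threads"
  unfolding threads_def using finite_atoms[OF finite_A] finite_atoms[OF finite_B]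
  by (auto intro!: finite_PiE simp: fiber_def)

lemma head_threads: "w \<in> threads \<Longrightarrow> w 0 \<in> atoms B"
  using head_PiE by (fastforce simp: threads_def fiber_def)

lemma shift_PiE:
  assumes q: "q \<in> atoms A" and w: "w \<in> (\<Pi>\<^sub>E i\<in>{..<n}. fiber ((g ^^ i) q))"
  shows "shift w \<in> (\<Pi>\<^sub>E i\<in>{..<n}. fiber ((g ^^ i) (g q)))"
proof (rule PiE_I)
  fix i assume i: "i \<in> {..<n}"
  show "shift w i \<in> fiber ((g ^^ i) (g q))"
  proof (cases "i < n - 1")
    case True
    then have "w (Suc i) \<in> fiber ((g ^^ Suc i) q)"
      by (intro PiE_mem[OF w]) simp
    then show ?thesis
      using True by (simp add: shift_def funpow_swap1)
  next
    case False
    then have "i = n - 1"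
      using i by auto
    moreover have "(g ^^ n) q = (g ^^ (n - 1)) (g q)"
      using n_pos by (cases n) (simp_all add: funpow_swap1)
    ultimately show ?thesis
      using f_mem_fiber[OF q head_PiE[OF w, simplified]] by (simp add: shift_def)
  qed
qed (use n_pos in \<open>auto simp: shift_def\<close>)

lemma shift_threads: "w \<in> threads \<Longrightarrow> shift w \<in> threads"
  using shift_PiE funpow_g_atoms[of _ 1] unfolding threads_def by fastforce

lemma inj_on_shift: "inj_on shift threads"
proof (rule inj_onI)
  fix w v assume w: "w \<in> threads" and v: "v \<in> threads" and eq: "shift w = shift v"
  have "f (w 0) = f (v 0)"
    using fun_cong[OF eq, of "n - 1"] by (simp add: shift_def)
  moreover have "inj_on f (sets B)"
    using aut_B by (simp add: ba_automorphism_def bij_betw_def)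
  ultimately have head: "w 0 = v 0"
    using head_threads[OF w] head_threads[OF v] by (auto simp: atoms_def dest: mba_atom_sets inj_onD)
  have tail: "w (Suc i) = v (Suc i)" if "i < n - 1" for i
    using fun_cong[OF eq, of i] that by (simp add: shift_def)
  have "w \<in> extensional {..<n}" "v \<in> extensional {..<n}"
    using w v by (auto simp: threads_def PiE_def)
  then show "w = v"
  proof (intro ext)
    fix i
    show "w i = v i"
      using head tail \<open>w \<in> extensional {..<n}\<close> \<open>v \<in> extensional {..<n}\<close>
      by (cases i; cases "i < n") (auto simp: extensional_def)
  qed
qed

lemma bij_shift: "bij_betw shift threads threads"
  using inj_on_shift endo_inj_surj[OF finite_threads _ inj_on_shift] shift_threads
  by (auto simp: bij_betw_def)

lemma funpow_shift_head: "(shift ^^ n) w 0 = f (w 0)"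
proof -
  have "(shift ^^ k) w (n - k) = f (w 0)" if "1 \<le> k" "k \<le> n" for k
    using that
  proof (induction k)
    case (Suc k)
    show ?case
    proof (cases "k = 0")
      case True
      then show ?thesis by (simp add: shift_def)
    next
      case False
      then have "n - Suc k < n - 1" "Suc (n - Suc k) = n - k"
        using Suc.prems by linarith+
      then show ?thesis
        using Suc False by (simp add: shift_def)
    qed
  qed simp
  then show ?thesis
    using n_pos by fastforce
qed

lemma threads_with_head:
  assumes q: "q \<in> atoms A" and b: "b \<in> fiber q"
  shows "{w\<in>threads. w 0 = b} = (\<Pi>\<^sub>E i\<in>{..<n}. if i = 0 then {b} else fiber ((g ^^ i) q))"
proof (intro equalityI subsetI)
  fix w assume "w \<in> {w\<in>threads. w 0 = b}"
  then have w0: "w 0 = b" and "w \<in> threads"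
    by simp_all
  then obtain q' where q': "q' \<in> atoms A" "w \<in> (\<Pi>\<^sub>E i\<in>{..<n}. fiber ((g ^^ i) q'))"
    unfolding threads_def by blast
  have "b \<in> fiber q'"
    using head_PiE[OF q'(2)] w0 by simp
  then have "q' = q"
    using fiber_unique[OF _ b q'(1) q] by blast
  show "w \<in> (\<Pi>\<^sub>E i\<in>{..<n}. if i = 0 then {b} else fiber ((g ^^ i) q))"
  proof (rule PiE_I)
    show "w i \<in> (if i = 0 then {b} else fiber ((g ^^ i) q))" if "i \<in> {..<n}" for i
      using PiE_mem[OF q'(2) that] w0 \<open>q' = q\<close> by simp
  qed (rule PiE_arb[OF q'(2)])
next
  fix w assume w: "w \<in> (\<Pi>\<^sub>E i\<in>{..<n}. if i = 0 then {b} else fiber ((g ^^ i) q))"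
  have "w \<in> (\<Pi>\<^sub>E i\<in>{..<n}. fiber ((g ^^ i) q))"
  proof (rule PiE_I)
    show "w i \<in> fiber ((g ^^ i) q)" if "i \<in> {..<n}" for i
      using PiE_mem[OF w that] b by (cases "i = 0") simp_all
  qed (rule PiE_arb[OF w])
  moreover have "w 0 = b"
    using head_PiE[OF w] by simp
  ultimately show "w \<in> {w\<in>threads. w 0 = b}"
    using q by (auto simp: threads_def)
qed

lemma card_threads_with_head:
  assumes "b \<in> atoms B"
  shows "card {w\<in>threads. w 0 = b} = fiber_size ^ (n - 1)"
proof -
  obtain q where q: "q \<in> atoms A" "b \<in> fiber q"
    using atom_B_below_atom_A[OF assms] by blast
  have "{..<n} = insert 0 {1..<n}"
    using n_pos by auto
  then have "card {w\<in>threads. w 0 = b} = (\<Prod>i\<in>{1..<n}. card (fiber ((g ^^ i) q)))"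
    by (simp add: threads_with_head[OF q] card_PiE)
  also have "\<dots> = fiber_size ^ (n - 1)"
    using card_fiber[OF funpow_g_atoms[OF q(1)]] by simp
  finally show ?thesis .
qed

lemma card_lift:
  assumes "X \<in> sets B"
  shows "card (lift X) = card {b\<in>atoms B. b \<subseteq> X} * fiber_size ^ (n - 1)"
proof -
  have "lift X = (\<Union>b\<in>{b\<in>atoms B. b \<subseteq> X}. {w\<in>threads. w 0 = b})"
    using head_threads by (auto simp: lift_def)
  also have "card \<dots> = (\<Sum>b\<in>{b\<in>atoms B. b \<subseteq> X}. card {w\<in>threads. w 0 = b})"
    using finite_atoms[OF finite_B] finite_threads by (intro card_UN_disjoint) auto
  also have "\<dots> = card {b\<in>atoms B. b \<subseteq> X} * fiber_size ^ (n - 1)"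
    using card_threads_with_head by simp
  finally show ?thesis .
qed

lemma lift_space: "lift (space B) = threads"
proof -
  have "w 0 \<subseteq> space B" if "w \<in> threads" for w
    using head_threads[OF that] sets.sets_into_space by (auto simp: atoms_def dest: mba_atom_sets)
  then show ?thesis
    by (auto simp: lift_def)
qed

lemma card_threads: "card threads = card (atoms B) * fiber_size ^ (n - 1)"
proof -
  have "{b\<in>atoms B. b \<subseteq> space B} = atoms B"
    using sets.sets_into_space by (auto simp: atoms_def dest: mba_atom_sets)
  then show ?thesis
    using card_lift[OF sets.top] by (simp add: lift_space)
qed

lemma card_threads_pos: "card threads > 0"
  using card_threads fiber_size_pos atoms_nonempty[OF finite_B] finite_atoms[OF finite_B]
  by (simp add: card_gt_0_iff)

lemma measure_lift:
  assumes "X \<in> sets B"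
  shows "card (lift X) / card threads = measure B X"
  using card_lift[OF assms] card_threads fiber_size_pos measure_equidistributed[OF equi_B assms]
  by simp

lemma lift_Un: "X \<in> sets B \<Longrightarrow> Y \<in> sets B \<Longrightarrow> lift (X \<union> Y) = lift X \<union> lift Y"
  using head_threads mba_atom_subset_or_disjoint[of B] mba_atom_nonempty[of B]
  by (fastforce simp: lift_def atoms_def)

lemma lift_Diff: "X \<in> sets B \<Longrightarrow> lift (space B - X) = threads - lift X"
  using head_threads mba_atom_subset_or_disjoint[of B] mba_atom_nonempty[of B]
    sets.sets_into_space mba_atom_sets[of B]
  by (fastforce simp: lift_def atoms_def)

lemma inj_on_lift: "inj_on lift (sets B)"
proof (rule inj_onI)
  fix X Y assume X: "X \<in> sets B" and Y: "Y \<in> sets B" and eq: "lift X = lift Y"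
  have "b \<subseteq> X \<longleftrightarrow> b \<subseteq> Y" if b: "b \<in> atoms B" for b
  proof -
    have "card {w\<in>threads. w 0 = b} \<noteq> 0"
      using card_threads_with_head[OF b] fiber_size_pos by simp
    then obtain w where "w \<in> threads" "w 0 = b"
      by (metis (mono_tags, lifting) card.empty empty_Collect_eq)
    then show ?thesis
      using eq by (auto simp: lift_def)
  qed
  then show "X = Y"
    using Union_atoms_below[OF finite_B X] Union_atoms_below[OF finite_B Y] by blast
qed

lemma shift_image_lift:
  assumes X: "X \<in> sets A"
  shows "shift ` lift X = lift (g X)"
  unfolding lift_def
proof (rule bij_betw_image_Collect[OF bij_shift])
  fix w assume "w \<in> threads"
  then obtain q where q: "q \<in> atoms A" "w \<in> (\<Pi>\<^sub>E i\<in>{..<n}. fiber ((g ^^ i) q))"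
    by (auto simp: threads_def)
  have "g q \<in> atoms A"
    using funpow_g_atoms[OF q(1), of 1] by simp
  have "w 0 \<subseteq> X \<longleftrightarrow> q \<subseteq> X"
    using fiber_subset_iff[OF _ q(1) X] head_PiE[OF q(2)] by simp
  also have "\<dots> \<longleftrightarrow> g q \<subseteq> g X"
    using ba_automorphism_subset_iff[OF aut_A _ X] q(1) by (auto simp: atoms_def dest: mba_atom_sets)
  also have "\<dots> \<longleftrightarrow> shift w 0 \<subseteq> g X"
    using fiber_subset_iff[OF _ \<open>g q \<in> atoms A\<close> ba_automorphism_sets[OF aut_A X]]
      head_PiE[OF shift_PiE[OF q]] by simp
  finally show "w 0 \<subseteq> X \<longleftrightarrow> shift w 0 \<subseteq> g X" .
qed

lemma funpow_shift_image_lift: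
  assumes X: "X \<in> sets B"
  shows "(shift ^^ n) ` lift X = lift (f X)"
  unfolding lift_def
proof (rule bij_betw_image_Collect[OF bij_betw_funpow[OF bij_shift]])
  fix w assume "w \<in> threads"
  then have "w 0 \<in> sets B"
    using head_threads by (auto simp: atoms_def dest: mba_atom_sets)
  then show "w 0 \<subseteq> X \<longleftrightarrow> (shift ^^ n) w 0 \<subseteq> f X"
    using ba_automorphism_subset_iff[OF aut_B _ X] by (simp add: funpow_shift_head)
qed

lemma mba_embedding_lift: "mba_embedding B (uniform_count_measure threads) lift"
  using finite_threads inj_on_lift lift_Un lift_Diff measure_lift
  by (intro mba_embedding_uniform_count_measureI) (auto simp: lift_def)

lemma extension_exists:
  assumes "\<And>S :: ('b \<times> nat) set. finite S \<Longrightarrow> card S = card threads \<Longrightarrow> P (uniform_count_measure S)"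
  shows "\<exists>(C::('b \<times> nat) measure) e h. P C \<and> mba_embedding B C e \<and> ba_automorphism C h \<and>
           (\<forall>X\<in>sets A. h (e X) = e (g X)) \<and> (\<forall>X\<in>sets B. (h ^^ n) (e X) = e (f X))"
proof -
  define S :: "('b \<times> nat) set" where "S = Pair undefined ` {..<card threads}"
  have S: "finite S" "card S = card threads"
    by (auto simp: S_def card_image inj_on_def)
  then obtain enc where "bij_betw enc threads S"
    using finite_same_card_bij[OF finite_threads] by metis
  then have "\<exists>e h. mba_embedding B (uniform_count_measure S) e \<and>
      ba_automorphism (uniform_count_measure S) h \<and>
      (\<forall>X\<in>sets A. h (e X) = e (g X)) \<and> (\<forall>X\<in>sets B. (h ^^ n) (e X) = e (f X))"
    using shift_image_lift funpow_shift_image_lift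
    by (intro uniform_count_measure_relabel_extension[OF finite_threads _ bij_shift mba_embedding_lift
          sets_A_subset]) auto
  then show ?thesis
    using assms[OF S] by blast
qed

lemma card_threads_dyadic:
  assumes "card (atoms A) = 2 ^ kA" "card (atoms B) = 2 ^ kB"
  shows "card threads = 2 ^ (kB + (kB - kA) * (n - 1))"
proof -
  obtain q where "q \<in> atoms A"
    using atoms_nonempty[OF finite_A] by blast
  then have "fiber_size * 2 ^ kA = 2 ^ kB"
    using card_fiber_mult card_fiber assms by metis
  then have "fiber_size = 2 ^ (kB - kA)"
    by (rule mult_pow2_eq_pow2)
  then show ?thesis
    by (simp add: card_threads assms(2) power_add power_mult)
qed

lemma extension_equidistributed:
  "\<exists>(C::('b \<times> nat) measure) e h. equidistributed C \<and> mba_embedding B C e \<and> ba_automorphism C h \<and>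
     (\<forall>X\<in>sets A. h (e X) = e (g X)) \<and> (\<forall>X\<in>sets B. (h ^^ n) (e X) = e (f X))"
  using card_threads_pos by (intro extension_exists equidistributed_uniform_count_measure) auto

lemma extension_dyadic:
  assumes "equidistributed_dyadic A" "equidistributed_dyadic B"
  shows "\<exists>(C::('b \<times> nat) measure) e h. equidistributed_dyadic C \<and> mba_embedding B C e \<and>
           ba_automorphism C h \<and>
           (\<forall>X\<in>sets A. h (e X) = e (g X)) \<and> (\<forall>X\<in>sets B. (h ^^ n) (e X) = e (f X))"
proof -
  obtain kA kB where "card (atoms A) = 2 ^ kA" "card (atoms B) = 2 ^ kB"
    using assms by (auto simp: equidistributed_dyadic_def atoms_def)
  then have "card threads = 2 ^ (kB + (kB - kA) * (n - 1))"
    by (rule card_threads_dyadic)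
  then show ?thesis
    by (intro extension_exists equidistributed_dyadic_uniform_count_measure) auto
qed

end

theorem mainTheorem5:
  fixes n :: nat
  assumes "n \<ge> 1"
  shows
  "(\<forall>(A::'a measure) (B::'a measure) g f.
      equidistributed A \<and> equidistributed B \<and> measured_subalgebra A B \<and>
      ba_automorphism A g \<and> ba_automorphism B f \<and> (\<forall>X\<in>sets A. f X = (g ^^ n) X) \<longrightarrow>
      (\<exists>(C::('a \<times> nat) measure) e h.
         equidistributed C \<and> mba_embedding B C e \<and> ba_automorphism C h \<and>
         (\<forall>X\<in>sets A. h (e X) = e (g X)) \<and>
         (\<forall>X\<in>sets B. (h ^^ n) (e X) = e (f X))))
   \<and>
   (\<forall>(A::'a measure) (B::'a measure) g f.
      equidistributed_dyadic A \<and> equidistributed_dyadic B \<and> measured_subalgebra A B \<and>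
      ba_automorphism A g \<and> ba_automorphism B f \<and> (\<forall>X\<in>sets A. f X = (g ^^ n) X) \<longrightarrow>
      (\<exists>(C::('a \<times> nat) measure) e h.
         equidistributed_dyadic C \<and> mba_embedding B C e \<and> ba_automorphism C h \<and>
         (\<forall>X\<in>sets A. h (e X) = e (g X)) \<and>
         (\<forall>X\<in>sets B. (h ^^ n) (e X) = e (f X))))"
proof (intro conjI allI impI, goal_cases)
  case (1 A B g f)
  then interpret root_extension n A B g f
    using assms by unfold_locales auto
  show ?case
    by (rule extension_equidistributed)
next
  case (2 A B g f)
  then interpret root_extension n A B g f
    using assms equidistributed_if_dyadic by unfold_locales auto
  show ?case
    using 2 by (intro extension_dyadic) auto
qed

end
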